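(* Let $S$ be a semigroup, $I, J$ sets and $P$ a $J \times I$ matrix with entries in $S$, and suppose the Rees matrix semigroup $M = M(S; I, J; P)$ is finitely generated. Let $\sigma : X^+ \to S$ and $\tau : Y^+ \to M$ be finite choices of generators. Then there is a rational transduction $\Phi$ from $\hat{X}^*$ to $\hat{Y}^*$ such that $L_\tau(M)$ is the Kleene closure of the image of $L_\sigma(S)$ under $\Phi$.
   Context: The Rees matrix semigroup $M(S; I, J; P)$ (with $P$ having all entries in $S$) has elements $I \times S \times J$ and product $(i_1, g_1, j_1)(i_2, g_2, j_2) = (i_1, g_1 P_{j_1 i_2} g_2, j_2)$. For a semigroup $S$, $S^1$ denotes the monoid obtained by adjoining a new identity $1$ (even if $S$ already has one). A choice of generators for $S$ is a surjective morphism $\sigma : X^+ \to S$ from a free semigroup, finite if $X$ is finite; it extends uniquely to $\sigma^1 : X^* \to S^1$. Let $\overline{X} = \{\overline{x} : x \in X\}$ be a set of formal inverses, $\hat{X} = X \cup \overline{X}$. The loop automaton of $S$ with respect to $\sigma$ is the directed labelled graph with vertex set $S^1$, having for each $a \in S^1$ and $x \in X$ an edge from $a$ to $a(x\sigma)$ labelled $x$ and an edge from $a(x\sigma)$ to $a$ labelled $\overline{x}$. The loop problem $L_\sigma(S) \subseteq \hat{X}^*$ is the set of words labelling paths from $1$ to $1$ in this graph (including the empty word). A rational transduction is a relation between free monoids realised by a finite-state transducer. *)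

theory Defs
  imports Main
begin

definition semigroup_on :: "'a set \<Rightarrow> ('a \<Rightarrow> 'a \<Rightarrow> 'a) \<Rightarrow> bool" where
  "semigroup_on S mult \<longleftrightarrow>
     (\<forall>a\<in>S. \<forall>b\<in>S. mult a b \<in> S) \<and>
     (\<forall>a\<in>S. \<forall>b\<in>S. \<forall>c\<in>S. mult (mult a b) c = mult a (mult b c))"

fun eval_word :: "('a \<Rightarrow> 'a \<Rightarrow> 'a) \<Rightarrow> ('x \<Rightarrow> 'a) \<Rightarrow> 'x list \<Rightarrow> 'a" where
  "eval_word mult gen [] = undefined"
| "eval_word mult gen (x # xs) = foldl (\<lambda>a y. mult a (gen y)) (gen x) xs"

definition generators :: "'a set \<Rightarrow> ('a \<Rightarrow> 'a \<Rightarrow> 'a) \<Rightarrow> ('x \<Rightarrow> 'a) \<Rightarrow> 'x set \<Rightarrow> bool" where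
  "generators S mult gen X \<longleftrightarrow>
     gen ` X \<subseteq> S \<and>
     (\<forall>s\<in>S. \<exists>w. w \<noteq> [] \<and> set w \<subseteq> X \<and> eval_word mult gen w = s)"

definition finitely_generated :: "'a set \<Rightarrow> ('a \<Rightarrow> 'a \<Rightarrow> 'a) \<Rightarrow> bool" where
  "finitely_generated S mult \<longleftrightarrow>
     (\<exists>(X::'a set) gen. finite X \<and> generators S mult gen X)"

definition rees_carrier :: "'a set \<Rightarrow> 'i set \<Rightarrow> 'j set \<Rightarrow> ('i \<times> 'a \<times> 'j) set" where
  "rees_carrier S I J = I \<times> S \<times> J"

fun rees_mult :: "('a \<Rightarrow> 'a \<Rightarrow> 'a) \<Rightarrow> ('j \<Rightarrow> 'i \<Rightarrow> 'a)
    \<Rightarrow> ('i \<times> 'a \<times> 'j) \<Rightarrow> ('i \<times> 'a \<times> 'j) \<Rightarrow> ('i \<times> 'a \<times> 'j)" where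
  "rees_mult mult P (i1, g1, j1) (i2, g2, j2) = (i1, mult (mult g1 (P j1 i2)) g2, j2)"

text \<open>Letters of X-hat = X together with formal inverses.\<close>
datatype 'x letter = Pos 'x | Neg 'x

definition hat :: "'x set \<Rightarrow> 'x letter set" where
  "hat X = Pos ` X \<union> Neg ` X"

text \<open>S^1 is represented by 'a option: None is the adjoined identity 1,
Some s is the element s of S.\<close>
definition mon1 :: "'a set \<Rightarrow> 'a option set" where
  "mon1 S = insert None (Some ` S)"

fun act :: "('a \<Rightarrow> 'a \<Rightarrow> 'a) \<Rightarrow> ('x \<Rightarrow> 'a) \<Rightarrow> 'a option \<Rightarrow> 'x \<Rightarrow> 'a option" where
  "act mult gen None x = Some (gen x)"
| "act mult gen (Some s) x = Some (mult s (gen x))"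

text \<open>Paths in the loop automaton: lpath a w b means w labels a path from a to b.
Edge a --x--> a(x sigma) and edge a(x sigma) --xbar--> a, for a in S^1, x in X.\<close>
inductive lpath :: "'a set \<Rightarrow> ('a \<Rightarrow> 'a \<Rightarrow> 'a) \<Rightarrow> ('x \<Rightarrow> 'a) \<Rightarrow> 'x set
    \<Rightarrow> 'a option \<Rightarrow> 'x letter list \<Rightarrow> 'a option \<Rightarrow> bool"
  for S mult gen X where
  nil: "a \<in> mon1 S \<Longrightarrow> lpath S mult gen X a [] a"
| pos: "a \<in> mon1 S \<Longrightarrow> x \<in> X \<Longrightarrow> lpath S mult gen X (act mult gen a x) w b
        \<Longrightarrow> lpath S mult gen X a (Pos x # w) b"
| neg: "a \<in> mon1 S \<Longrightarrow> x \<in> X \<Longrightarrow> lpath S mult gen X a w b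
        \<Longrightarrow> lpath S mult gen X (act mult gen a x) (Neg x # w) b"

definition loop_problem :: "'a set \<Rightarrow> ('a \<Rightarrow> 'a \<Rightarrow> 'a) \<Rightarrow> ('x \<Rightarrow> 'a) \<Rightarrow> 'x set
    \<Rightarrow> 'x letter list set" where
  "loop_problem S mult gen X = {w. lpath S mult gen X None w None}"

inductive trun :: "(nat \<times> 'a list \<times> 'b list \<times> nat) set \<Rightarrow> nat \<Rightarrow> 'a list \<Rightarrow> 'b list \<Rightarrow> nat \<Rightarrow> bool"
  for Delta where
  trun_nil: "trun Delta q [] [] q"
| trun_step: "(q, u, v, q') \<in> Delta \<Longrightarrow> trun Delta q' w z q''
        \<Longrightarrow> trun Delta q (u @ w) (v @ z) q''"

definition rational_transduction :: "'a set \<Rightarrow> 'b set \<Rightarrow> ('a list \<times> 'b list) set \<Rightarrow> bool" where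
  "rational_transduction A B R \<longleftrightarrow>
     (\<exists>Delta Init Fin. finite Delta \<and> finite Init \<and> finite Fin \<and>
        (\<forall>(q, u, v, q') \<in> Delta. set u \<subseteq> A \<and> set v \<subseteq> B) \<and>
        R = {(u, v). \<exists>q\<in>Init. \<exists>q'\<in>Fin. trun Delta q u v q'})"

definition rel_image :: "('a list \<times> 'b list) set \<Rightarrow> 'a list set \<Rightarrow> 'b list set" where
  "rel_image R L = {v. \<exists>u\<in>L. (u, v) \<in> R}"

definition kleene :: "'a list set \<Rightarrow> 'a list set" where
  "kleene L = {concat ws | ws. set ws \<subseteq> L}"

end

theory Submission
  imports Defs "HOL-Library.Countable_Set"
begin

(* A loop at 1 in the loop automaton of M = M(S; I, J; P) splits at its returns to 1 into
   excursions.  During an excursion the automaton sits at elements (i, g, j) of M, and right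
   multiplication by a generator (i', g', j') replaces g by g P(j, i') g' and j by j'.  Only
   finitely many pairs (i, j) occur, since i and j are read off the first and last generator
   of a word.  So a transducer that keeps (i, j) in its state, while its input moves g along
   the loop automaton of S, can output an excursion of M exactly when it reads a loop of S. *)

section \<open>Kleene closure and transducers\<close>

lemma kleene_Nil: "[] \<in> kleene L"
  unfolding kleene_def by (auto intro: exI[of _ "[]"])

lemma kleene_Cons_append:
  assumes "u \<in> L" and "v \<in> kleene L"
  shows "u @ v \<in> kleene L"
proof -
  obtain ws where "v = concat ws" "set ws \<subseteq> L"
    using assms(2) unfolding kleene_def by blast
  with assms(1) show ?thesis
    unfolding kleene_def by (auto intro!: exI[of _ "u # ws"])
qed

lemma kleene_subset:
  assumes "[] \<in> A" and "\<And>u v. u \<in> L \<Longrightarrow> v \<in> A \<Longrightarrow> u @ v \<in> A"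
  shows "kleene L \<subseteq> A"
proof
  fix w assume "w \<in> kleene L"
  then obtain ws where "w = concat ws" "set ws \<subseteq> L"
    unfolding kleene_def by blast
  then show "w \<in> A"
    using assms by (induction ws arbitrary: w) auto
qed

lemma trun_no_outgoing:
  assumes "trun Delta q u v q'" and "\<And>u v q''. (q, u, v, q'') \<notin> Delta"
  shows "u = [] \<and> v = [] \<and> q' = q"
  using assms by (cases rule: trun.cases) auto

lemma rational_transductionI:
  assumes "finite Delta"
    and "\<And>q u v q'. (q, u, v, q') \<in> Delta \<Longrightarrow> set u \<subseteq> A \<and> set v \<subseteq> B"
  shows "rational_transduction A B {(u, v). trun Delta q0 u v q1}"
  unfolding rational_transduction_def
proof (rule exI[of _ Delta], rule exI[of _ "{q0}"], rule exI[of _ "{q1}"], intro conjI)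
  show "\<forall>(q, u, v, q') \<in> Delta. set u \<subseteq> A \<and> set v \<subseteq> B"
    using assms(2) by blast
qed (use assms(1) in auto)

section \<open>Rees matrix semigroups\<close>

lemma semigroup_on_rees:
  assumes "semigroup_on S mult" and "\<forall>j\<in>J. \<forall>i\<in>I. P j i \<in> S"
  shows "semigroup_on (rees_carrier S I J) (rees_mult mult P)"
proof -
  have closed: "mult a b \<in> S" if "a \<in> S" "b \<in> S" for a b
    using assms(1) that unfolding semigroup_on_def by blast
  have assoc: "mult (mult a b) c = mult a (mult b c)" if "a \<in> S" "b \<in> S" "c \<in> S" for a b c
    using assms(1) that unfolding semigroup_on_def by blast
  show ?thesis
    using assms(2) unfolding semigroup_on_def rees_carrier_def
    by (auto simp: closed assoc)
qed

lemma fst_rees_mult: "fst (rees_mult mult P a b) = fst a"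
  by (cases a; cases b) simp

lemma snd_snd_rees_mult: "snd (snd (rees_mult mult P a b)) = snd (snd b)"
  by (cases a; cases b) simp

lemma eval_word_rees_ends:
  assumes "w \<noteq> []"
  shows "fst (eval_word (rees_mult mult P) tau w) = fst (tau (hd w))"
    and "snd (snd (eval_word (rees_mult mult P) tau w)) = snd (snd (tau (last w)))"
proof -
  let ?f = "\<lambda>a y. rees_mult mult P a (tau y)"
  have "fst (foldl ?f a ys) = fst a" for a ys
    by (induction ys arbitrary: a) (simp_all add: fst_rees_mult)
  moreover have "snd (snd (foldl ?f a ys)) = snd (snd (if ys = [] then a else tau (last ys)))"
    for a ys
    by (induction ys arbitrary: a) (simp_all add: snd_snd_rees_mult)
  ultimately show "fst (eval_word (rees_mult mult P) tau w) = fst (tau (hd w))"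
    and "snd (snd (eval_word (rees_mult mult P) tau w)) = snd (snd (tau (last w)))"
    using assms by (cases w; simp)+
qed

section \<open>Loop automata\<close>

lemma None_in_mon1 [simp]: "None \<in> mon1 S"
  by (simp add: mon1_def)

lemma Some_in_mon1_iff [simp]: "Some s \<in> mon1 S \<longleftrightarrow> s \<in> S"
  by (auto simp: mon1_def)

locale generated_semigroup =
  fixes S :: "'a set" and mult :: "'a \<Rightarrow> 'a \<Rightarrow> 'a" and gen :: "'x \<Rightarrow> 'a" and X :: "'x set"
  assumes semigroup: "semigroup_on S mult"
    and generators: "generators S mult gen X"
begin

abbreviation path :: "'a option \<Rightarrow> 'x letter list \<Rightarrow> 'a option \<Rightarrow> bool" where
  "path \<equiv> lpath S mult gen X"

lemma mult_closed: "a \<in> S \<Longrightarrow> b \<in> S \<Longrightarrow> mult a b \<in> S"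
  using semigroup unfolding semigroup_on_def by blast

lemma mult_assoc:
  "a \<in> S \<Longrightarrow> b \<in> S \<Longrightarrow> c \<in> S \<Longrightarrow> mult (mult a b) c = mult a (mult b c)"
  using semigroup unfolding semigroup_on_def by blast

lemma gen_in: "x \<in> X \<Longrightarrow> gen x \<in> S"
  using generators unfolding generators_def by blast

lemma act_in_mon1: "c \<in> mon1 S \<Longrightarrow> x \<in> X \<Longrightarrow> act mult gen c x \<in> mon1 S"
  by (cases c) (auto simp: mon1_def gen_in mult_closed)

lemma path_mon1: "path a w b \<Longrightarrow> a \<in> mon1 S \<and> b \<in> mon1 S"
  by (induction rule: lpath.induct) (auto simp: act_in_mon1)

lemma path_Nil_iff: "path a [] b \<longleftrightarrow> a \<in> mon1 S \<and> b = a"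
  by (auto elim: lpath.cases intro: lpath.nil)

lemma path_Pos_Cons_iff:
  "path a (Pos x # w) b \<longleftrightarrow> a \<in> mon1 S \<and> x \<in> X \<and> path (act mult gen a x) w b"
  by (auto elim: lpath.cases intro: lpath.pos)

lemma path_Neg_Cons_iff:
  "path c (Neg x # w) b \<longleftrightarrow> (\<exists>a\<in>mon1 S. x \<in> X \<and> c = act mult gen a x \<and> path a w b)"
  by (auto elim: lpath.cases intro: lpath.neg)

lemma path_append_iff: "path a (u @ v) c \<longleftrightarrow> (\<exists>b. path a u b \<and> path b v c)"
proof (induction u arbitrary: a)
  case Nil
  show ?case
    using path_mon1 by (auto simp: path_Nil_iff)
next
  case (Cons l u)
  then show ?case
    by (cases l) (auto simp: path_Pos_Cons_iff path_Neg_Cons_iff)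
qed

lemma path_Pos_word_iff:
  "path a (map Pos w) b \<longleftrightarrow> a \<in> mon1 S \<and> set w \<subseteq> X \<and> b = foldl (act mult gen) a w"
  by (induction w arbitrary: a) (auto simp: path_Nil_iff path_Pos_Cons_iff act_in_mon1)

lemma path_Neg_word_iff: "path b (map Neg (rev w)) a \<longleftrightarrow> path a (map Pos w) b"
proof (induction w arbitrary: b rule: rev_induct)
  case Nil
  show ?case
    by (auto simp: path_Nil_iff)
next
  case (snoc x w)
  then show ?case
    by (auto simp: path_Neg_Cons_iff path_append_iff path_Pos_Cons_iff path_Nil_iff
        act_in_mon1)
qed

lemma path_Pos_iff: "path a [Pos x] b \<longleftrightarrow> a \<in> mon1 S \<and> x \<in> X \<and> b = act mult gen a x"
  using path_Pos_word_iff[of a "[x]" b] by simp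

lemma path_Neg_iff: "path b [Neg x] a \<longleftrightarrow> a \<in> mon1 S \<and> x \<in> X \<and> b = act mult gen a x"
  using path_Neg_word_iff[of b "[x]" a] path_Pos_iff by simp

lemma foldl_act_Some_eq:
  "foldl (act mult gen) (Some g) w = Some (foldl (\<lambda>a y. mult a (gen y)) g w)"
  by (induction w arbitrary: g) auto

lemma foldl_act_None: "w \<noteq> [] \<Longrightarrow> foldl (act mult gen) None w = Some (eval_word mult gen w)"
  by (cases w) (auto simp: foldl_act_Some_eq)

lemma foldl_act_Some:
  assumes "g \<in> S" "w \<noteq> []" "set w \<subseteq> X"
  shows "foldl (act mult gen) (Some g) w = Some (mult g (eval_word mult gen w))"
proof -
  have "foldl (\<lambda>a y. mult a (gen y)) (mult g s) v = mult g (foldl (\<lambda>a y. mult a (gen y)) s v)"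
    if "s \<in> S" "set v \<subseteq> X" for s v
    using that assms(1)
    by (induction v arbitrary: s) (auto simp: mult_assoc gen_in mult_closed)
  with assms show ?thesis
    by (cases w) (auto simp: foldl_act_Some_eq gen_in)
qed

lemma act_not_None: "act mult gen c x \<noteq> None"
  by (cases c) auto

lemma exists_incoming_edge:
  assumes "g \<in> S"
  shows "\<exists>x\<in>X. \<exists>c\<in>mon1 S. act mult gen c x = Some g"
proof -
  obtain w where w: "w \<noteq> []" "set w \<subseteq> X" "eval_word mult gen w = g"
    using assms generators unfolding generators_def by blast
  then obtain v x where wv: "w = v @ [x]"
    by (metis rev_exhaust)
  have "path None (map Pos v) (foldl (act mult gen) None v)"
    using w(2) wv by (simp add: path_Pos_word_iff mon1_def)
  then have "foldl (act mult gen) None v \<in> mon1 S"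
    using path_mon1 by blast
  then show ?thesis
    using foldl_act_None[OF w(1)] w wv by auto
qed

definition rep_word :: "'a \<Rightarrow> 'x list" where
  "rep_word s = (SOME w. w \<noteq> [] \<and> set w \<subseteq> X \<and> eval_word mult gen w = s)"

lemma rep_word:
  "s \<in> S \<Longrightarrow> rep_word s \<noteq> [] \<and> set (rep_word s) \<subseteq> X \<and> eval_word mult gen (rep_word s) = s"
  unfolding rep_word_def by (rule someI_ex) (use generators in \<open>auto simp: generators_def\<close>)

lemma rep_word_letter: "x \<in> set (rep_word s) \<Longrightarrow> s \<in> S \<Longrightarrow> x \<in> X"
  using rep_word by blast

lemma path_rep_word_from_None:
  "s \<in> S \<Longrightarrow> path None (map Pos (rep_word s)) e \<longleftrightarrow> e = Some s"
  using rep_word[of s] by (auto simp: path_Pos_word_iff mon1_def foldl_act_None)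

lemma path_rep_word_from_Some:
  "g \<in> S \<Longrightarrow> s \<in> S \<Longrightarrow> path (Some g) (map Pos (rep_word s)) e \<longleftrightarrow> e = Some (mult g s)"
  using rep_word[of s] by (auto simp: path_Pos_word_iff mon1_def foldl_act_Some)

lemma path_Neg_PosD: "path c [Neg x, Pos x] e \<Longrightarrow> e = c \<and> c \<in> Some ` S"
  using act_in_mon1 act_not_None
  by (fastforce simp: path_Neg_Cons_iff path_Pos_Cons_iff path_Nil_iff mon1_def)

lemma exists_Neg_Pos_loop:
  assumes "g \<in> S"
  shows "\<exists>x\<in>X. path (Some g) [Neg x, Pos x] (Some g)"
proof -
  obtain x c where "x \<in> X" "c \<in> mon1 S" "act mult gen c x = Some g"
    using exists_incoming_edge[OF assms] by blast
  then show ?thesis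
    by (auto simp: path_Neg_Cons_iff path_Pos_Cons_iff path_Nil_iff act_in_mon1
        intro!: bexI[of _ x] bexI[of _ c])
qed

end

section \<open>The transducer for a Rees matrix semigroup\<close>

locale rees_transducer = generated_semigroup S mult sigma X
  for S :: "'a set" and mult and sigma :: "'x \<Rightarrow> 'a" and X +
  fixes I :: "'i set" and J :: "'j set" and P :: "'j \<Rightarrow> 'i \<Rightarrow> 'a"
    and Y :: "'y set" and tau :: "'y \<Rightarrow> 'i \<times> 'a \<times> 'j"
  assumes P_in: "\<forall>j\<in>J. \<forall>i\<in>I. P j i \<in> S"
    and generators_rees: "generators (rees_carrier S I J) (rees_mult mult P) tau Y"
    and finite_X: "finite X"
    and finite_Y: "finite Y"
begin

sublocale Rees: generated_semigroup "rees_carrier S I J" "rees_mult mult P" tau Y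
  by unfold_locales (use semigroup P_in semigroup_on_rees generators_rees in auto)

definition tau_i :: "'y \<Rightarrow> 'i" where "tau_i y = fst (tau y)"
definition tau_g :: "'y \<Rightarrow> 'a" where "tau_g y = fst (snd (tau y))"
definition tau_j :: "'y \<Rightarrow> 'j" where "tau_j y = snd (snd (tau y))"

lemma tau_eq: "tau y = (tau_i y, tau_g y, tau_j y)"
  by (simp add: tau_i_def tau_g_def tau_j_def)

lemma tau_in: "y \<in> Y \<Longrightarrow> tau_i y \<in> I \<and> tau_g y \<in> S \<and> tau_j y \<in> J"
  using Rees.gen_in[of y] by (simp add: tau_eq rees_carrier_def)

definition factor :: "'j \<Rightarrow> 'y \<Rightarrow> 'a" where
  "factor j y = mult (P j (tau_i y)) (tau_g y)"

lemma factor_in: "j \<in> J \<Longrightarrow> y \<in> Y \<Longrightarrow> factor j y \<in> S"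
  using P_in tau_in by (simp add: factor_def mult_closed)

lemma rees_mult_tau:
  assumes "g \<in> S" "j \<in> J" "y \<in> Y"
  shows "rees_mult mult P (i, g, j) (tau y) = (i, mult g (factor j y), tau_j y)"
  using assms P_in tau_in[OF assms(3)] by (simp add: tau_eq factor_def mult_assoc)

lemma act_rees_None: "act (rees_mult mult P) tau None y = Some (tau_i y, tau_g y, tau_j y)"
  by (simp add: tau_eq)

lemma act_rees_Some:
  "g \<in> S \<Longrightarrow> j \<in> J \<Longrightarrow> y \<in> Y \<Longrightarrow>
    act (rees_mult mult P) tau (Some (i, g, j)) y = Some (i, mult g (factor j y), tau_j y)"
  by (simp add: rees_mult_tau)

definition index_pairs :: "('i \<times> 'j) set" where
  "index_pairs = tau_i ` Y \<times> tau_j ` Y"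

lemma finite_index_pairs: "finite index_pairs"
  using finite_Y by (simp add: index_pairs_def)

lemma index_pairs_subset: "(i, j) \<in> index_pairs \<Longrightarrow> i \<in> I \<and> j \<in> J"
  using tau_in by (auto simp: index_pairs_def)

lemma index_pairs_cover:
  assumes "(i, g, j) \<in> rees_carrier S I J"
  shows "(i, j) \<in> index_pairs"
proof -
  obtain w where w: "w \<noteq> []" "set w \<subseteq> Y" "eval_word (rees_mult mult P) tau w = (i, g, j)"
    using assms generators_rees unfolding generators_def by blast
  then have "i = tau_i (hd w)" "j = tau_j (last w)"
    using eval_word_rees_ends[OF w(1), of mult P tau] by (simp_all add: tau_i_def tau_j_def)
  then show ?thesis
    using w(1,2) hd_in_set last_in_set by (auto simp: index_pairs_def)
qed

lemma mon1_rees_SomeD: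
  "Some (i, g, j) \<in> mon1 (rees_carrier S I J) \<Longrightarrow> (i, j) \<in> index_pairs \<and> g \<in> S \<and> j \<in> J"
  using index_pairs_cover by (auto simp: rees_carrier_def)

(* 0 and 1 are the initial and the final state. *)
definition state :: "'i \<times> 'j \<Rightarrow> nat" where
  "state p = to_nat_on index_pairs p + 2"

lemma state_inj:
  "p \<in> index_pairs \<Longrightarrow> p' \<in> index_pairs \<Longrightarrow> state p = state p' \<longleftrightarrow> p = p'"
  using finite_index_pairs by (simp add: state_def countable_finite)

lemma state_neq [simp]: "state p \<noteq> 0" "state p \<noteq> Suc 0"
  by (simp_all add: state_def)

(* Neg x Pos x labels a path only from an element of S to itself, since no edge enters the
   adjoined identity; in the last kind of transition this detour keeps the simulated path in S
   away from 1. *)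
definition Delta :: "(nat \<times> 'x letter list \<times> 'y letter list \<times> nat) set" where
  "Delta =
     (\<lambda>y. (0, map Pos (rep_word (tau_g y)), [Pos y], state (tau_i y, tau_j y))) ` Y \<union>
     (\<lambda>((i, j), y).
         (state (i, j), map Pos (rep_word (factor j y)), [Pos y], state (i, tau_j y)))
       ` (index_pairs \<times> Y) \<union>
     (\<lambda>y. (state (tau_i y, tau_j y), map Neg (rev (rep_word (tau_g y))), [Neg y], 1)) ` Y \<union>
     (\<lambda>((i, j), y, x).
         (state (i, tau_j y), map Neg (rev (rep_word (factor j y))) @ [Neg x, Pos x], [Neg y],
          state (i, j)))
       ` (index_pairs \<times> Y \<times> X)"

definition Phi :: "('x letter list \<times> 'y letter list) set" where
  "Phi = {(u, v). trun Delta 0 u v 1}"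

lemma Delta_enter:
  "y \<in> Y \<Longrightarrow> (0, map Pos (rep_word (tau_g y)), [Pos y], state (tau_i y, tau_j y)) \<in> Delta"
  by (simp add: Delta_def)

lemma Delta_step:
  "(i, j) \<in> index_pairs \<Longrightarrow> y \<in> Y \<Longrightarrow>
    (state (i, j), map Pos (rep_word (factor j y)), [Pos y], state (i, tau_j y)) \<in> Delta"
  unfolding Delta_def
  by (rule UnI1, rule UnI1, rule UnI2, rule rev_image_eqI[of "((i, j), y)"]) auto

lemma Delta_exit:
  "y \<in> Y \<Longrightarrow>
    (state (tau_i y, tau_j y), map Neg (rev (rep_word (tau_g y))), [Neg y], 1) \<in> Delta"
  by (simp add: Delta_def)

lemma Delta_back:
  "(i, j) \<in> index_pairs \<Longrightarrow> y \<in> Y \<Longrightarrow> x \<in> X \<Longrightarrow>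
    (state (i, tau_j y), map Neg (rev (rep_word (factor j y))) @ [Neg x, Pos x], [Neg y],
     state (i, j)) \<in> Delta"
  unfolding Delta_def by (rule UnI2, rule rev_image_eqI[of "((i, j), y, x)"]) auto

lemma rational_transduction_Phi: "rational_transduction (hat X) (hat Y) Phi"
  unfolding Phi_def
proof (rule rational_transductionI)
  show "finite Delta"
    using finite_X finite_Y finite_index_pairs by (simp add: Delta_def)
  show "set u \<subseteq> hat X \<and> set v \<subseteq> hat Y" if "(q, u, v, q') \<in> Delta" for q u v q'
    using that tau_in factor_in index_pairs_subset unfolding Delta_def
    by (elim UnE imageE) (auto simp: hat_def dest!: rep_word_letter)
qed

definition sync :: "nat \<Rightarrow> 'a option \<Rightarrow> ('i \<times> 'a \<times> 'j) option \<Rightarrow> bool" where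
  "sync q c a \<longleftrightarrow> ((q = 0 \<or> q = 1) \<and> c = None \<and> a = None) \<or>
     (\<exists>i g j. (i, j) \<in> index_pairs \<and> g \<in> S \<and> q = state (i, j) \<and>
        c = Some g \<and> a = Some (i, g, j))"

lemma sync_0_1: "q = 0 \<or> q = 1 \<Longrightarrow> sync q c a \<longleftrightarrow> c = None \<and> a = None"
  by (auto simp: sync_def state_def)

lemma sync_state:
  "(i, j) \<in> index_pairs \<Longrightarrow>
    sync (state (i, j)) c a \<longleftrightarrow> (\<exists>g\<in>S. c = Some g \<and> a = Some (i, g, j))"
  by (auto simp: sync_def state_inj)

lemma sync_mon1: "sync q c a \<Longrightarrow> a \<in> mon1 (rees_carrier S I J)"
  by (auto simp: sync_def rees_carrier_def index_pairs_subset)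

lemma enter_sound:
  assumes "y \<in> Y" "path None (map Pos (rep_word (tau_g y))) e"
  shows "\<exists>a'. sync (state (tau_i y, tau_j y)) e a' \<and> Rees.path None [Pos y] a'"
proof -
  have "e = Some (tau_g y)"
    using assms tau_in path_rep_word_from_None by simp
  moreover have "(tau_i y, tau_j y) \<in> index_pairs"
    using assms(1) by (simp add: index_pairs_def)
  ultimately show ?thesis
    using assms(1) tau_in by (auto simp: sync_state Rees.path_Pos_iff tau_eq)
qed

lemma step_sound:
  assumes "(i, j) \<in> index_pairs" "y \<in> Y" "sync (state (i, j)) c a"
    and "path c (map Pos (rep_word (factor j y))) e"
  shows "\<exists>a'. sync (state (i, tau_j y)) e a' \<and> Rees.path a [Pos y] a'"
proof -
  obtain g where g: "g \<in> S" "c = Some g" "a = Some (i, g, j)"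
    using assms(1,3) sync_state by blast
  have j: "j \<in> J"
    using assms(1) index_pairs_subset by blast
  have "e = Some (mult g (factor j y))"
    using assms(4) g path_rep_word_from_Some factor_in[OF j assms(2)] by blast
  moreover have "(i, tau_j y) \<in> index_pairs"
    using assms(1,2) by (auto simp: index_pairs_def)
  ultimately show ?thesis
    using assms(2) g j sync_mon1[OF assms(3)]
    by (auto simp: sync_state Rees.path_Pos_iff rees_mult_tau mult_closed factor_in)
qed

lemma exit_sound:
  assumes "y \<in> Y" "sync (state (tau_i y, tau_j y)) c a"
    and "path c (map Neg (rev (rep_word (tau_g y)))) None"
  shows "Rees.path a [Neg y] None"
proof -
  have "(tau_i y, tau_j y) \<in> index_pairs"
    using assms(1) by (simp add: index_pairs_def)
  then obtain g where "c = Some g" "a = Some (tau_i y, g, tau_j y)"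
    using assms(2) sync_state by blast
  moreover have "c = Some (tau_g y)"
    using assms(3) path_Neg_word_iff path_rep_word_from_None tau_in[OF assms(1)] by blast
  ultimately show ?thesis
    using assms(1) by (simp add: Rees.path_Neg_iff tau_eq)
qed

lemma back_sound:
  assumes "(i, j) \<in> index_pairs" "y \<in> Y" "sync (state (i, tau_j y)) c a"
    and "path c (map Neg (rev (rep_word (factor j y))) @ [Neg x, Pos x]) e"
  shows "\<exists>a'. sync (state (i, j)) e a' \<and> Rees.path a [Neg y] a'"
proof -
  have j: "j \<in> J"
    using assms(1) index_pairs_subset by blast
  have "(i, tau_j y) \<in> index_pairs"
    using assms(1,2) by (auto simp: index_pairs_def)
  then obtain h where h: "c = Some h" "a = Some (i, h, tau_j y)"
    using assms(3) sync_state by blast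
  obtain e' where "path c (map Neg (rev (rep_word (factor j y)))) e'" "path e' [Neg x, Pos x] e"
    using assms(4) path_append_iff by blast
  moreover obtain g where g: "g \<in> S" "e' = Some g" "e = Some g"
    using path_Neg_PosD calculation(2) by blast
  ultimately have "h = mult g (factor j y)"
    using h(1) path_Neg_word_iff path_rep_word_from_Some factor_in[OF j assms(2)] by simp
  moreover have "(i, g, j) \<in> rees_carrier S I J"
    using assms(1) g(1) index_pairs_subset by (simp add: rees_carrier_def)
  ultimately show ?thesis
    using assms(1,2) g h j by (auto simp: sync_state Rees.path_Neg_iff rees_mult_tau)
qed

lemma transition_sound:
  assumes "(q, u, v, q') \<in> Delta" "sync q c a" "path c u e" "q' = 1 \<Longrightarrow> e = None"
  shows "\<exists>a'. sync q' e a' \<and> Rees.path a v a'"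
  using assms unfolding Delta_def
  by (elim UnE imageE; clarsimp simp: sync_0_1)
    (blast intro: enter_sound, blast intro: step_sound, blast intro: exit_sound,
      blast intro: back_sound)

lemma no_transition_from_final: "(1, u, v, q) \<notin> Delta"
  by (auto simp: Delta_def state_def)

lemma run_sound:
  assumes "trun Delta q u v q'" "sync q c a" "path c u e" "q' = 1 \<Longrightarrow> e = None"
  shows "\<exists>a'. sync q' e a' \<and> Rees.path a v a'"
  using assms
proof (induction arbitrary: c a rule: trun.induct)
  case (trun_nil q)
  then show ?case
    using sync_mon1 by (auto simp: path_Nil_iff Rees.path_Nil_iff)
next
  case (trun_step q u1 v1 q1 w z q'')
  obtain e1 where e1: "path c u1 e1" "path e1 w e"
    using trun_step.prems(2) path_append_iff by blast
  have "e1 = None" if "q1 = 1"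
  proof -
    have "w = [] \<and> q'' = q1"
      using trun_no_outgoing[OF trun_step.hyps(2)] no_transition_from_final that by blast
    then show ?thesis
      using e1(2) trun_step.prems(3) that by (simp add: path_Nil_iff)
  qed
  then obtain a1 where a1: "sync q1 e1 a1" "Rees.path a v1 a1"
    using transition_sound[OF trun_step.hyps(1) trun_step.prems(1) e1(1)] by blast
  then obtain a' where "sync q'' e a'" "Rees.path a1 z a'"
    using trun_step.IH e1(2) trun_step.prems(3) by blast
  with a1 show ?case
    using Rees.path_append_iff by blast
qed

abbreviation excursions :: "'y letter list set" where
  "excursions \<equiv> rel_image Phi (loop_problem S mult sigma X)"

lemma excursions_subset:
  "excursions \<subseteq> loop_problem (rees_carrier S I J) (rees_mult mult P) tau Y"
  using run_sound[of 0 _ _ 1 None None None]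
  by (auto simp: rel_image_def Phi_def loop_problem_def sync_0_1)

definition finishes :: "'i \<Rightarrow> 'a \<Rightarrow> 'j \<Rightarrow> 'y letter list \<Rightarrow> bool" where
  "finishes i g j v \<longleftrightarrow> (\<exists>u. path (Some g) u None \<and> trun Delta (state (i, j)) u v 1)"

lemma enter_complete:
  assumes "y \<in> Y" "finishes (tau_i y) (tau_g y) (tau_j y) v"
  shows "Pos y # v \<in> excursions"
proof -
  obtain u where u: "path (Some (tau_g y)) u None" "trun Delta (state (tau_i y, tau_j y)) u v 1"
    using assms(2) finishes_def by blast
  have "trun Delta 0 (map Pos (rep_word (tau_g y)) @ u) ([Pos y] @ v) 1"
    using Delta_enter[OF assms(1)] u(2) by (rule trun_step)
  moreover have "path None (map Pos (rep_word (tau_g y)) @ u) None"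
    using u(1) tau_in[OF assms(1)] path_rep_word_from_None path_append_iff by blast
  ultimately show ?thesis
    by (auto simp: rel_image_def Phi_def loop_problem_def)
qed

lemma step_complete:
  assumes "(i, j) \<in> index_pairs" "y \<in> Y" "g \<in> S"
    and "finishes i (mult g (factor j y)) (tau_j y) v"
  shows "finishes i g j (Pos y # v)"
proof -
  obtain u where u: "path (Some (mult g (factor j y))) u None"
      "trun Delta (state (i, tau_j y)) u v 1"
    using assms(4) finishes_def by blast
  have "trun Delta (state (i, j)) (map Pos (rep_word (factor j y)) @ u) ([Pos y] @ v) 1"
    using Delta_step[OF assms(1,2)] u(2) by (rule trun_step)
  moreover have "path (Some g) (map Pos (rep_word (factor j y)) @ u) None"
    using u(1) assms index_pairs_subset factor_in path_rep_word_from_Some path_append_iff by blast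
  ultimately show ?thesis
    unfolding finishes_def by auto
qed

lemma exit_complete:
  assumes "y \<in> Y"
  shows "finishes (tau_i y) (tau_g y) (tau_j y) [Neg y]"
proof -
  have "trun Delta (state (tau_i y, tau_j y))
      (map Neg (rev (rep_word (tau_g y))) @ []) ([Neg y] @ []) 1"
    using Delta_exit[OF assms] trun_nil by (rule trun_step)
  moreover have "path (Some (tau_g y)) (map Neg (rev (rep_word (tau_g y)))) None"
    using tau_in[OF assms] path_Neg_word_iff path_rep_word_from_None by blast
  ultimately show ?thesis
    unfolding finishes_def by auto
qed

lemma back_complete:
  assumes "(i, j) \<in> index_pairs" "y \<in> Y" "g \<in> S" "finishes i g j v"
  shows "finishes i (mult g (factor j y)) (tau_j y) (Neg y # v)"
proof -
  obtain u where u: "path (Some g) u None" "trun Delta (state (i, j)) u v 1"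
    using assms(4) finishes_def by blast
  obtain x where x: "x \<in> X" "path (Some g) [Neg x, Pos x] (Some g)"
    using exists_Neg_Pos_loop[OF assms(3)] by blast
  let ?u = "map Neg (rev (rep_word (factor j y))) @ [Neg x, Pos x]"
  have "trun Delta (state (i, tau_j y)) (?u @ u) ([Neg y] @ v) 1"
    using Delta_back[OF assms(1,2) x(1)] u(2) by (rule trun_step)
  moreover have "path (Some (mult g (factor j y))) (?u @ u) None"
  proof -
    have "path (Some (mult g (factor j y))) (map Neg (rev (rep_word (factor j y)))) (Some g)"
      using assms index_pairs_subset factor_in path_Neg_word_iff path_rep_word_from_Some by blast
    then show ?thesis
      using x(2) u(1) path_append_iff by (metis append_assoc)
  qed
  ultimately show ?thesis
    unfolding finishes_def by auto
qed

definition decomposes :: "('i \<times> 'a \<times> 'j) option \<Rightarrow> 'y letter list \<Rightarrow> bool" where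
  "decomposes a w \<longleftrightarrow> (case a of
      None \<Rightarrow> w \<in> kleene excursions
    | Some (i, g, j) \<Rightarrow> \<exists>v1 v2. w = v1 @ v2 \<and> finishes i g j v1 \<and> v2 \<in> kleene excursions)"

lemma decomposes_None [simp]: "decomposes None w \<longleftrightarrow> w \<in> kleene excursions"
  by (simp add: decomposes_def)

lemma decomposes_SomeI:
  "w = v1 @ v2 \<Longrightarrow> finishes i g j v1 \<Longrightarrow> v2 \<in> kleene excursions \<Longrightarrow>
    decomposes (Some (i, g, j)) w"
  by (auto simp: decomposes_def)

lemma decomposes_SomeE:
  assumes "decomposes (Some (i, g, j)) w"
  obtains v1 v2 where "w = v1 @ v2" "finishes i g j v1" "v2 \<in> kleene excursions"
  using assms by (auto simp: decomposes_def)

lemma decomposes_Pos: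
  assumes "a \<in> mon1 (rees_carrier S I J)" "y \<in> Y"
    and "decomposes (act (rees_mult mult P) tau a y) w"
  shows "decomposes a (Pos y # w)"
proof (cases a)
  case None
  obtain v1 v2 where v: "w = v1 @ v2" "finishes (tau_i y) (tau_g y) (tau_j y) v1"
      "v2 \<in> kleene excursions"
    using assms(3)[unfolded None act_rees_None] by (rule decomposes_SomeE)
  have "(Pos y # v1) @ v2 \<in> kleene excursions"
    using kleene_Cons_append[OF enter_complete[OF assms(2) v(2)] v(3)] .
  with None v(1) show ?thesis
    by simp
next
  case (Some m)
  then obtain i g j where a: "a = Some (i, g, j)"
    by (cases m) auto
  then have ij: "(i, j) \<in> index_pairs" "g \<in> S" "j \<in> J"
    using assms(1) mon1_rees_SomeD by blast+
  obtain v1 v2 where v: "w = v1 @ v2" "finishes i (mult g (factor j y)) (tau_j y) v1"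
      "v2 \<in> kleene excursions"
    using assms(3)[unfolded a act_rees_Some[OF ij(2,3) assms(2)]] by (rule decomposes_SomeE)
  have "finishes i g j (Pos y # v1)"
    using step_complete[OF ij(1) assms(2) ij(2) v(2)] .
  then show ?thesis
    unfolding a using decomposes_SomeI[of "Pos y # w" "Pos y # v1" v2] v(1,3) by simp
qed

lemma decomposes_Neg:
  assumes "a \<in> mon1 (rees_carrier S I J)" "y \<in> Y" "decomposes a w"
  shows "decomposes (act (rees_mult mult P) tau a y) (Neg y # w)"
proof (cases a)
  case None
  show ?thesis
    unfolding None act_rees_None
    using assms(3) None decomposes_SomeI[of "Neg y # w" "[Neg y]" w] exit_complete[OF assms(2)]
    by simp
next
  case (Some m)
  then obtain i g j where a: "a = Some (i, g, j)"
    by (cases m) auto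
  then have ij: "(i, j) \<in> index_pairs" "g \<in> S" "j \<in> J"
    using assms(1) mon1_rees_SomeD by blast+
  obtain v1 v2 where v: "w = v1 @ v2" "finishes i g j v1" "v2 \<in> kleene excursions"
    using assms(3)[unfolded a] by (rule decomposes_SomeE)
  have "finishes i (mult g (factor j y)) (tau_j y) (Neg y # v1)"
    using back_complete[OF ij(1) assms(2) ij(2) v(2)] .
  then show ?thesis
    unfolding a act_rees_Some[OF ij(2,3) assms(2)]
    using decomposes_SomeI[of "Neg y # w" "Neg y # v1" v2] v(1,3) by simp
qed

lemma path_complete: "Rees.path a w b \<Longrightarrow> b = None \<Longrightarrow> decomposes a w"
  by (induction rule: lpath.induct) (auto simp: kleene_Nil intro: decomposes_Pos decomposes_Neg)

lemma loop_problem_rees_eq: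
  "loop_problem (rees_carrier S I J) (rees_mult mult P) tau Y = kleene excursions"
proof
  show "loop_problem (rees_carrier S I J) (rees_mult mult P) tau Y \<subseteq> kleene excursions"
    using path_complete[of None _ None] by (auto simp: loop_problem_def)
  show "kleene excursions \<subseteq> loop_problem (rees_carrier S I J) (rees_mult mult P) tau Y"
  proof (rule kleene_subset)
    show "[] \<in> loop_problem (rees_carrier S I J) (rees_mult mult P) tau Y"
      by (simp add: loop_problem_def Rees.path_Nil_iff)
    show "u @ v \<in> loop_problem (rees_carrier S I J) (rees_mult mult P) tau Y"
      if "u \<in> excursions" "v \<in> loop_problem (rees_carrier S I J) (rees_mult mult P) tau Y" for u v
    proof -
      have "Rees.path None u None" "Rees.path None v None"
        using that excursions_subset by (auto simp: loop_problem_def)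
      then show ?thesis
        unfolding loop_problem_def using Rees.path_append_iff by blast
    qed
  qed
qed

end

theorem theorem4p1:
  fixes S :: "'a set" and mult :: "'a \<Rightarrow> 'a \<Rightarrow> 'a"
    and I :: "'i set" and J :: "'j set" and P :: "'j \<Rightarrow> 'i \<Rightarrow> 'a"
    and X :: "'x set" and sigma :: "'x \<Rightarrow> 'a"
    and Y :: "'y set" and tau :: "'y \<Rightarrow> 'i \<times> 'a \<times> 'j"
  assumes "semigroup_on S mult"
    and "\<forall>j\<in>J. \<forall>i\<in>I. P j i \<in> S"
    and "finitely_generated (rees_carrier S I J) (rees_mult mult P)"
    and "finite X" and "generators S mult sigma X"
    and "finite Y" and "generators (rees_carrier S I J) (rees_mult mult P) tau Y"
  shows "\<exists>Phi. rational_transduction (hat X) (hat Y) Phi \<and>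
           loop_problem (rees_carrier S I J) (rees_mult mult P) tau Y
             = kleene (rel_image Phi (loop_problem S mult sigma X))"
proof -
  \<comment> \<open>Finite generation of M is already witnessed by tau.\<close>
  interpret rees_transducer S mult sigma X I J P Y tau
    by unfold_locales (use assms in auto)
  show ?thesis
    using rational_transduction_Phi loop_problem_rees_eq by blast
qed

end
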